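(* Let $U\subset\mathbb{R}^n$ be open, let $u\in C^2(U)$ with $u>0$, and let $w=\log u$. Define $$Qw=\Delta w-\frac{D^2w(Dw,Dw)}{1+|Dw|^2}+|Dw|^2 .$$ Then $$\operatorname{div}\frac{u\,Du}{\sqrt{u^2+|Du|^2}}\ge 0 \iff Qw\ge 0,\qquad \operatorname{div}\frac{u\,Du}{\sqrt{u^2+|Du|^2}}\le 0 \iff Qw\le 0,$$ and $$\operatorname{div}\frac{u\,Du}{\sqrt{u^2+|Du|^2}}= 0 \iff Qw= 0 .$$
   Context: $Du$ denotes the gradient, $D^2w$ the Hessian of $w$, and $D^2w(Dw,Dw)=\sum_{i,j}\partial_i\partial_j w\,\partial_i w\,\partial_j w$. *)

theory Defs
  imports "HOL-Analysis.Analysis"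
begin

definition grad :: "('a::euclidean_space \<Rightarrow> real) \<Rightarrow> 'a \<Rightarrow> 'a" where
  "grad f x = (\<Sum>i\<in>Basis. frechet_derivative f (at x) i *\<^sub>R i)"

definition hess :: "('a::euclidean_space \<Rightarrow> real) \<Rightarrow> 'a \<Rightarrow> 'a \<Rightarrow> 'a \<Rightarrow> real" where
  "hess f x i j = frechet_derivative (\<lambda>y. grad f y \<bullet> j) (at x) i"

definition laplacian :: "('a::euclidean_space \<Rightarrow> real) \<Rightarrow> 'a \<Rightarrow> real" where
  "laplacian f x = (\<Sum>i\<in>Basis. hess f x i i)"

definition hess_form :: "('a::euclidean_space \<Rightarrow> real) \<Rightarrow> 'a \<Rightarrow> 'a \<Rightarrow> 'a \<Rightarrow> real" where
  "hess_form f x v w = (\<Sum>i\<in>Basis. \<Sum>j\<in>Basis. hess f x i j * (v \<bullet> i) * (w \<bullet> j))"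

definition divergence :: "('a::euclidean_space \<Rightarrow> 'a) \<Rightarrow> 'a \<Rightarrow> real" where
  "divergence V x = (\<Sum>i\<in>Basis. frechet_derivative (\<lambda>y. V y \<bullet> i) (at x) i)"

definition C2_on :: "'a::euclidean_space set \<Rightarrow> ('a \<Rightarrow> real) \<Rightarrow> bool" where
  "C2_on U f \<longleftrightarrow>
     (\<forall>x\<in>U. f differentiable (at x)) \<and>
     (\<forall>j\<in>Basis. \<forall>x\<in>U. (\<lambda>y. grad f y \<bullet> j) differentiable (at x)) \<and>
     (\<forall>i\<in>Basis. \<forall>j\<in>Basis. continuous_on U (\<lambda>y. hess f y i j))"

definition Qop :: "('a::euclidean_space \<Rightarrow> real) \<Rightarrow> 'a \<Rightarrow> real" where
  "Qop w x = laplacian w x - hess_form w x (grad w x) (grad w x) / (1 + (norm (grad w x))\<^sup>2)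
             + (norm (grad w x))\<^sup>2"

end

theory Submission
  imports Defs
begin

text \<open>Both sides are pointwise expressions in \<open>u\<close>, \<open>Du\<close>, \<open>D\<^sup>2u\<close>. Put
  \<open>T = u\<^sup>2 + |Du|\<^sup>2\<close> and \<open>N = u \<Delta>u T + |Du|\<^sup>4 - u D\<^sup>2u(Du,Du)\<close>. Differentiating the flux gives
  \<open>div (u Du / \<surd>T) = N / (\<surd>T T)\<close>, while \<open>Dw = Du/u\<close> and \<open>D\<^sup>2w = (u D\<^sup>2u - Du\<otimes>Du)/u\<^sup>2\<close>
  give \<open>Qw = N / (u\<^sup>2 T)\<close>. Hence the divergence is the positive multiple \<open>u\<^sup>2/\<surd>T\<close> of \<open>Qw\<close>.\<close>

lemma grad_inner_Basis:
  fixes f :: "'a::euclidean_space \<Rightarrow> real"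
  assumes "j \<in> Basis"
  shows "grad f x \<bullet> j = frechet_derivative f (at x) j"
  unfolding grad_def using assms
  by (simp add: inner_sum_left inner_Basis if_distrib cong: if_cong)

lemma power2_norm_eq_sum_Basis:
  fixes v :: "'a::euclidean_space"
  shows "(norm v)\<^sup>2 = (\<Sum>k\<in>Basis. (v \<bullet> k)\<^sup>2)"
  unfolding power2_norm_eq_inner by (subst euclidean_inner) (simp add: power2_eq_square)

lemma grad_ln:
  fixes u :: "'a::euclidean_space \<Rightarrow> real"
  assumes "u differentiable (at x)" and "u x > 0"
  shows "grad (\<lambda>y. ln (u y)) x = grad u x /\<^sub>R u x"
proof (rule euclidean_eqI)
  fix j :: 'a assume j: "j \<in> Basis"
  have "((\<lambda>y. ln (u y)) has_derivative (\<lambda>h. frechet_derivative u (at x) h * inverse (u x))) (at x)"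
    using DERIV_compose_FDERIV[OF DERIV_ln[OF assms(2)] frechet_derivative_works[THEN iffD1, OF assms(1)]] .
  then show "grad (\<lambda>y. ln (u y)) x \<bullet> j = (grad u x /\<^sub>R u x) \<bullet> j"
    by (simp add: grad_inner_Basis[OF j] frechet_derivative_at[symmetric] divide_inverse)
qed

lemma hess_ln:
  fixes u :: "'a::euclidean_space \<Rightarrow> real"
  assumes "open U" and "x \<in> U"
    and "\<And>y. y \<in> U \<Longrightarrow> u differentiable (at y)" and "\<And>y. y \<in> U \<Longrightarrow> u y > 0"
    and "(\<lambda>y. grad u y \<bullet> j) differentiable (at x)" and "i \<in> Basis"
  shows "hess (\<lambda>y. ln (u y)) x i j
    = (u x * hess u x i j - (grad u x \<bullet> i) * (grad u x \<bullet> j)) / (u x)\<^sup>2"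
proof -
  have ux: "u x \<noteq> 0"
    using assms(2,4) by force
  have "((\<lambda>y. (grad u y \<bullet> j) / u y) has_derivative
      (\<lambda>h. (frechet_derivative (\<lambda>y. grad u y \<bullet> j) (at x) h * u x
            - (grad u x \<bullet> j) * frechet_derivative u (at x) h) / (u x * u x))) (at x)"
    using assms(2,3,5) ux
    by (intro has_derivative_divide' frechet_derivative_works[THEN iffD1]) auto
  then have "((\<lambda>y. grad (\<lambda>y. ln (u y)) y \<bullet> j) has_derivative
      (\<lambda>h. (frechet_derivative (\<lambda>y. grad u y \<bullet> j) (at x) h * u x
            - (grad u x \<bullet> j) * frechet_derivative u (at x) h) / (u x * u x))) (at x)"
    by (rule has_derivative_transform_within_open[OF _ assms(1,2)])
      (simp add: grad_ln assms(3,4) divide_inverse_commute)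
  then show ?thesis
    unfolding hess_def
    by (simp add: frechet_derivative_at[symmetric] grad_inner_Basis[OF assms(6)] power2_eq_square algebra_simps)
qed

lemma partial_flux_component:
  fixes u :: "'a::euclidean_space \<Rightarrow> real"
  assumes du: "u differentiable (at x)"
    and dgrad: "\<And>k. k \<in> Basis \<Longrightarrow> (\<lambda>y. grad u y \<bullet> k) differentiable (at x)"
    and "u x \<noteq> 0" and i: "i \<in> Basis"
  defines "T \<equiv> (u x)\<^sup>2 + (norm (grad u x))\<^sup>2"
  shows "frechet_derivative (\<lambda>y. ((u y / sqrt ((u y)\<^sup>2 + (norm (grad u y))\<^sup>2)) *\<^sub>R grad u y) \<bullet> i) (at x) i
    = ((u x * hess u x i i + (grad u x \<bullet> i)\<^sup>2) * T
       - u x * (grad u x \<bullet> i) * (u x * (grad u x \<bullet> i) + (\<Sum>k\<in>Basis. hess u x i k * (grad u x \<bullet> k))))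
      / (sqrt T * T)"
proof -
  define Du where "Du = frechet_derivative u (at x)"
  define D where "D k = frechet_derivative (\<lambda>y. grad u y \<bullet> k) (at x)" for k
  define S where "S y = (u y)\<^sup>2 + (\<Sum>k\<in>Basis. (grad u y \<bullet> k)\<^sup>2)" for y
  have T_pos: "T > 0"
    using \<open>u x \<noteq> 0\<close> unfolding T_def by (simp add: add_pos_nonneg)
  have S_x: "S x = T"
    unfolding S_def T_def power2_norm_eq_sum_Basis ..
  have hu: "(u has_derivative Du) (at x)"
    using du unfolding Du_def by (rule frechet_derivative_works[THEN iffD1])
  have hgrad: "((\<lambda>y. grad u y \<bullet> k) has_derivative D k) (at x)" if "k \<in> Basis" for k
    using dgrad[OF that] unfolding D_def by (rule frechet_derivative_works[THEN iffD1])
  have hS: "(S has_derivative (\<lambda>h. of_nat 2 * Du h * u x ^ (2-1) +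
      (\<Sum>k\<in>Basis. of_nat 2 * D k h * (grad u x \<bullet> k) ^ (2-1)))) (at x)"
    unfolding S_def by (intro has_derivative_add has_derivative_power hu has_derivative_sum hgrad)
  have hsqrt: "((\<lambda>y. sqrt (S y)) has_derivative (\<lambda>h. (of_nat 2 * Du h * u x ^ (2-1) +
      (\<Sum>k\<in>Basis. of_nat 2 * D k h * (grad u x \<bullet> k) ^ (2-1))) * (inverse (sqrt (S x)) / 2))) (at x)"
    by (rule DERIV_compose_FDERIV[OF DERIV_real_sqrt hS]) (simp add: S_x T_pos)
  have component: "(\<lambda>y. ((u y / sqrt ((u y)\<^sup>2 + (norm (grad u y))\<^sup>2)) *\<^sub>R grad u y) \<bullet> i)
      = (\<lambda>y. (u y * (grad u y \<bullet> i)) / sqrt (S y))"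
    by (simp add: S_def power2_norm_eq_sum_Basis)
  have "((\<lambda>y. (u y * (grad u y \<bullet> i)) / sqrt (S y)) has_derivative
      (\<lambda>h. ((u x * D i h + Du h * (grad u x \<bullet> i)) * sqrt (S x) - u x * (grad u x \<bullet> i) *
        ((of_nat 2 * Du h * u x ^ (2-1) + (\<Sum>k\<in>Basis. of_nat 2 * D k h * (grad u x \<bullet> k) ^ (2-1)))
          * (inverse (sqrt (S x)) / 2))) / (sqrt (S x) * sqrt (S x)))) (at x)"
    using S_x T_pos by (intro has_derivative_divide' has_derivative_mult hu hgrad i hsqrt) auto
  then have "frechet_derivative (\<lambda>y. (u y * (grad u y \<bullet> i)) / sqrt (S y)) (at x) i =
      ((u x * D i i + Du i * (grad u x \<bullet> i)) * sqrt (S x) - u x * (grad u x \<bullet> i) *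
        ((of_nat 2 * Du i * u x ^ (2-1) + (\<Sum>k\<in>Basis. of_nat 2 * D k i * (grad u x \<bullet> k) ^ (2-1)))
          * (inverse (sqrt (S x)) / 2))) / (sqrt (S x) * sqrt (S x))"
    by (simp add: frechet_derivative_at[symmetric])
  also have "\<dots> = ((u x * hess u x i i + (grad u x \<bullet> i)\<^sup>2) * sqrt T - u x * (grad u x \<bullet> i)
      * ((2 * (u x * (grad u x \<bullet> i)) + 2 * (\<Sum>k\<in>Basis. hess u x i k * (grad u x \<bullet> k))) * (inverse (sqrt T) / 2)))
      / (sqrt T * sqrt T)"
    unfolding Du_def D_def hess_def grad_inner_Basis[OF i, symmetric]
    by (simp add: S_x sum_distrib_left mult.assoc power2_eq_square)
  also have "\<dots> = ((u x * hess u x i i + (grad u x \<bullet> i)\<^sup>2) * T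
       - u x * (grad u x \<bullet> i) * (u x * (grad u x \<bullet> i) + (\<Sum>k\<in>Basis. hess u x i k * (grad u x \<bullet> k))))
      / (sqrt T * T)"
  proof -
    have key: "(A * r - B * ((2 * a + 2 * c) * (inverse r / 2))) / (r * r)
        = (A * (r * r) - B * (a + c)) / (r * (r * r))" if "r > 0" for A B a c r :: real
      using that by (simp add: field_simps)
    have r: "sqrt T > 0" "sqrt T * sqrt T = T"
      using T_pos by simp_all
    show ?thesis
      using key[OF r(1)] unfolding r(2) .
  qed
  finally show ?thesis
    unfolding component .
qed

lemma hess_form_grad:
  fixes f :: "'a::euclidean_space \<Rightarrow> real"
  shows "hess_form f x v v = (\<Sum>i\<in>Basis. (v \<bullet> i) * (\<Sum>k\<in>Basis. hess f x i k * (v \<bullet> k)))"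
  unfolding hess_form_def by (simp add: sum_distrib_left algebra_simps)

lemma hess_form_scaleR:
  fixes f :: "'a::euclidean_space \<Rightarrow> real"
  shows "hess_form f x (a *\<^sub>R v) (b *\<^sub>R w) = a * b * hess_form f x v w"
  unfolding hess_form_def by (simp add: sum_distrib_left algebra_simps)

lemma divergence_flux:
  fixes u :: "'a::euclidean_space \<Rightarrow> real"
  assumes "u differentiable (at x)"
    and "\<And>k. k \<in> Basis \<Longrightarrow> (\<lambda>y. grad u y \<bullet> k) differentiable (at x)"
    and "u x \<noteq> 0"
  defines "P \<equiv> (norm (grad u x))\<^sup>2"
  defines "T \<equiv> (u x)\<^sup>2 + P"
  shows "divergence (\<lambda>y. (u y / sqrt ((u y)\<^sup>2 + (norm (grad u y))\<^sup>2)) *\<^sub>R grad u y) x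
    = (u x * laplacian u x * T + P\<^sup>2 - u x * hess_form u x (grad u x) (grad u x)) / (sqrt T * T)"
proof -
  let ?p = "\<lambda>i. grad u x \<bullet> i"
  let ?C = "\<lambda>i. \<Sum>k\<in>Basis. hess u x i k * ?p k"
  have "divergence (\<lambda>y. (u y / sqrt ((u y)\<^sup>2 + (norm (grad u y))\<^sup>2)) *\<^sub>R grad u y) x
      = (\<Sum>i\<in>Basis. (u x * T * hess u x i i + T * (?p i)\<^sup>2 - (u x)\<^sup>2 * (?p i)\<^sup>2
          - u x * (?p i * ?C i))) / (sqrt T * T)"
    unfolding divergence_def sum_divide_distrib
    by (intro sum.cong refl, subst partial_flux_component[OF assms(1-3)])
      (simp_all add: P_def T_def algebra_simps power2_eq_square)
  also have "(\<Sum>i\<in>Basis. u x * T * hess u x i i + T * (?p i)\<^sup>2 - (u x)\<^sup>2 * (?p i)\<^sup>2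
          - u x * (?p i * ?C i))
      = u x * T * laplacian u x + T * P - (u x)\<^sup>2 * P - u x * hess_form u x (grad u x) (grad u x)"
    by (simp add: sum.distrib sum_subtractf sum_distrib_left[symmetric] laplacian_def P_def
        power2_norm_eq_sum_Basis hess_form_grad)
  also have "\<dots> = u x * laplacian u x * T + P\<^sup>2 - u x * hess_form u x (grad u x) (grad u x)"
    unfolding T_def by (simp add: algebra_simps power2_eq_square)
  finally show ?thesis .
qed

lemma Qop_ln:
  fixes u :: "'a::euclidean_space \<Rightarrow> real"
  assumes "open U" and "x \<in> U"
    and "\<And>y. y \<in> U \<Longrightarrow> u differentiable (at y)" and "\<And>y. y \<in> U \<Longrightarrow> u y > 0"
    and "\<And>k. k \<in> Basis \<Longrightarrow> (\<lambda>y. grad u y \<bullet> k) differentiable (at x)"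
  defines "P \<equiv> (norm (grad u x))\<^sup>2"
  defines "T \<equiv> (u x)\<^sup>2 + P"
  shows "Qop (\<lambda>y. ln (u y)) x
    = (u x * laplacian u x * T + P\<^sup>2 - u x * hess_form u x (grad u x) (grad u x)) / ((u x)\<^sup>2 * T)"
proof -
  let ?p = "\<lambda>i. grad u x \<bullet> i"
  let ?B = "hess_form u x (grad u x) (grad u x)"
  have ux: "u x > 0"
    using assms(2,4) by blast
  have hess_w: "hess (\<lambda>y. ln (u y)) x i j = (u x * hess u x i j - ?p i * ?p j) / (u x)\<^sup>2"
    if "i \<in> Basis" "j \<in> Basis" for i j
    using hess_ln[OF assms(1,2)] assms(3-5) that by blast
  have grad_w: "grad (\<lambda>y. ln (u y)) x = grad u x /\<^sub>R u x"
    using grad_ln assms(2-4) by blast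
  have norm_w: "(norm (grad (\<lambda>y. ln (u y)) x))\<^sup>2 = P / (u x)\<^sup>2"
    unfolding grad_w P_def using ux by (simp add: power_mult_distrib power_inverse divide_inverse)
  have laplacian_w: "laplacian (\<lambda>y. ln (u y)) x = (u x * laplacian u x - P) / (u x)\<^sup>2"
    unfolding laplacian_def P_def power2_norm_eq_sum_Basis
    by (simp add: hess_w sum_divide_distrib[symmetric] sum_subtractf sum_distrib_left power2_eq_square)
  have "hess_form (\<lambda>y. ln (u y)) x (grad u x) (grad u x)
      = (\<Sum>i\<in>Basis. \<Sum>j\<in>Basis. (u x * (hess u x i j * ?p i * ?p j) - (?p i)\<^sup>2 * (?p j)\<^sup>2) / (u x)\<^sup>2)"
    unfolding hess_form_def
    by (intro sum.cong refl) (simp add: hess_w algebra_simps power2_eq_square)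
  also have "\<dots> = (u x * ?B - P\<^sup>2) / (u x)\<^sup>2"
    unfolding P_def power2_norm_eq_sum_Basis power2_eq_square[of "sum _ _"] sum_product hess_form_def
    by (simp add: sum_divide_distrib[symmetric] sum_subtractf sum_distrib_left power2_eq_square algebra_simps)
  finally have hess_form_w: "hess_form (\<lambda>y. ln (u y)) x (grad (\<lambda>y. ln (u y)) x) (grad (\<lambda>y. ln (u y)) x)
      = (u x * ?B - P\<^sup>2) / (u x)\<^sup>2 / (u x)\<^sup>2"
    unfolding grad_w hess_form_scaleR using ux by (simp add: field_simps power2_eq_square)
  have T_pos: "T > 0"
    unfolding T_def P_def using ux by (simp add: add_pos_nonneg)
  have "1 + P / (u x)\<^sup>2 = T / (u x)\<^sup>2"
    unfolding T_def using ux by (simp add: field_simps)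
  then show ?thesis
    unfolding Qop_def norm_w laplacian_w hess_form_w
    using ux T_pos by (simp add: field_simps power2_eq_square)
qed

lemma divergence_flux_eq_Qop_ln:
  fixes u :: "'a::euclidean_space \<Rightarrow> real"
  assumes "open U" and "x \<in> U"
    and "\<And>y. y \<in> U \<Longrightarrow> u differentiable (at y)" and "\<And>y. y \<in> U \<Longrightarrow> u y > 0"
    and "\<And>k. k \<in> Basis \<Longrightarrow> (\<lambda>y. grad u y \<bullet> k) differentiable (at x)"
  defines "T \<equiv> (u x)\<^sup>2 + (norm (grad u x))\<^sup>2"
  shows "divergence (\<lambda>y. (u y / sqrt ((u y)\<^sup>2 + (norm (grad u y))\<^sup>2)) *\<^sub>R grad u y) x
    = (u x)\<^sup>2 / sqrt T * Qop (\<lambda>y. ln (u y)) x"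
proof -
  have ux: "u x > 0"
    using assms(2,4) by blast
  have "N / (r * T) = a / r * (N / (a * T))" if "a \<noteq> 0" for N r T a :: real
    using that by simp
  then show ?thesis
    using divergence_flux[OF assms(3)[OF assms(2)] assms(5)] Qop_ln[OF assms(1-5)] ux
    unfolding T_def by simp
qed

lemma sign_iff_of_pos_factor:
  fixes c q :: real
  assumes "d = c * q" and "c > 0"
  shows "(d \<ge> 0 \<longleftrightarrow> q \<ge> 0) \<and> (d \<le> 0 \<longleftrightarrow> q \<le> 0) \<and> (d = 0 \<longleftrightarrow> q = 0)"
  using assms by (simp add: zero_le_mult_iff mult_le_0_iff)

theorem mainTheorem1:
  fixes U :: "'a::euclidean_space set" and u :: "'a \<Rightarrow> real"
  assumes "open U" and "C2_on U u" and "\<And>x. x \<in> U \<Longrightarrow> u x > 0"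
  defines "w \<equiv> (\<lambda>x. ln (u x))"
  shows "\<forall>x\<in>U.
     (divergence (\<lambda>y. (u y / sqrt ((u y)\<^sup>2 + (norm (grad u y))\<^sup>2)) *\<^sub>R grad u y) x \<ge> 0 \<longleftrightarrow> Qop w x \<ge> 0) \<and>
     (divergence (\<lambda>y. (u y / sqrt ((u y)\<^sup>2 + (norm (grad u y))\<^sup>2)) *\<^sub>R grad u y) x \<le> 0 \<longleftrightarrow> Qop w x \<le> 0) \<and>
     (divergence (\<lambda>y. (u y / sqrt ((u y)\<^sup>2 + (norm (grad u y))\<^sup>2)) *\<^sub>R grad u y) x = 0 \<longleftrightarrow> Qop w x = 0)"
proof
  fix x assume x: "x \<in> U"
  let ?div = "divergence (\<lambda>y. (u y / sqrt ((u y)\<^sup>2 + (norm (grad u y))\<^sup>2)) *\<^sub>R grad u y) x"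
  let ?T = "(u x)\<^sup>2 + (norm (grad u x))\<^sup>2"
  have du: "\<And>y. y \<in> U \<Longrightarrow> u differentiable (at y)"
    and dgrad: "\<And>k. k \<in> Basis \<Longrightarrow> (\<lambda>y. grad u y \<bullet> k) differentiable (at x)"
    using assms(2) x unfolding C2_on_def by blast+
  have ux: "u x > 0"
    using assms(3) x .
  then have T_pos: "?T > 0"
    by (simp add: add_pos_nonneg)
  have "?div = (u x)\<^sup>2 / sqrt ?T * Qop w x"
    unfolding w_def using assms(1) x du assms(3) dgrad by (rule divergence_flux_eq_Qop_ln)
  moreover have "(u x)\<^sup>2 / sqrt ?T > 0"
    using ux T_pos by simp
  ultimately show "(?div \<ge> 0 \<longleftrightarrow> Qop w x \<ge> 0) \<and> (?div \<le> 0 \<longleftrightarrow> Qop w x \<le> 0) \<and> (?div = 0 \<longleftrightarrow> Qop w x = 0)"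
    by (rule sign_iff_of_pos_factor)
qed

end
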